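(* Let $T\in M_n(\mathbb C)$ be a nilpotent matrix such that $\|T\|=\|T^{n-1}\|=1$. Then $T$ is unitarily similar to $S$, i.e. there is a unitary $U$ with $T=USU^*$.
   Context: $S$ denotes the $n\times n$ nilpotent Jordan block with ones on the superdiagonal and zeros elsewhere. $\|\cdot\|$ is the operator norm on $M_n(\mathbb C)$ induced by the Euclidean norm on $\mathbb C^n$. *)

theory Defs
  imports "HOL-Analysis.Analysis"
begin

text \<open>n x n complex matrices are complex^'n^'n with n = CARD('n); the index type is
  well-ordered so that the superdiagonal makes sense: the position of index i is
  the number of indices strictly below i.\<close>

definition idx_pos :: "'n::{finite,wellorder} \<Rightarrow> nat" where
  "idx_pos i = card {k. k < i}"

text \<open>S: nilpotent Jordan block, ones on the superdiagonal (entry (i,i+1)).\<close>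
definition shift_mat :: "complex^('n::{finite,wellorder})^('n::{finite,wellorder})" where
  "shift_mat = (\<chi> (i::'n::{finite,wellorder}) (j::'n::{finite,wellorder}). if idx_pos j = idx_pos i + 1 then 1 else 0)"

primrec mat_pow :: "('a::semiring_1)^('n::finite)^'n \<Rightarrow> nat \<Rightarrow> 'a^'n^'n" where
  "mat_pow A 0 = mat 1"
| "mat_pow A (Suc k) = A ** mat_pow A k"

definition nilpotent_mat :: "('a::semiring_1)^('n::finite)^'n \<Rightarrow> bool" where
  "nilpotent_mat A \<longleftrightarrow> (\<exists>k. mat_pow A k = 0)"

definition adjoint_mat :: "complex^('n::finite)^'n \<Rightarrow> complex^'n^'n" where
  "adjoint_mat A = (\<chi> i j. cnj (A $ j $ i))"

definition unitary_mat :: "complex^('n::finite)^'n \<Rightarrow> bool" where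
  "unitary_mat U \<longleftrightarrow> U ** adjoint_mat U = mat 1 \<and> adjoint_mat U ** U = mat 1"

definition op_norm :: "complex^('n::finite)^'n \<Rightarrow> real" where
  "op_norm A = onorm (\<lambda>x. A *v x)"

end

theory Submission
  imports Defs
begin

text \<open>Pick a unit vector x with \<open>\<parallel>T\<^sup>n\<^sup>-\<^sup>1 x\<parallel> = 1\<close>. Since T is a contraction, all vectors
  \<open>T\<^sup>k x\<close> (k < n) are unit vectors, so T acts isometrically on them and hence preserves
  their inner products. Shifting \<open>\<langle>T\<^sup>i x, T\<^sup>j x\<rangle>\<close> (i < j) forward until the second vector
  is killed by nilpotency shows that they are orthonormal. In the orthonormal basis
  \<open>T\<^sup>n\<^sup>-\<^sup>1 x, \<dots>, T x, x\<close> the matrix of T is S.\<close>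

lemma mat_pow_add: "mat_pow (T::'a::comm_ring_1^'n^'n) (a + b) = mat_pow T a ** mat_pow T b"
  by (induction a) (simp_all add: matrix_mul_assoc)

lemma mat_pow_Suc': "mat_pow (T::'a::comm_ring_1^'n^'n) (Suc k) = mat_pow T k ** T"
  using mat_pow_add[of T k 1] by simp

lemma mat_pow_mulv_add: "mat_pow T (a + b) *v x = mat_pow T a *v (mat_pow T b *v x)"
  for T :: "'a::comm_ring_1^'n^'n"
  by (simp add: mat_pow_add matrix_vector_mul_assoc)

text \<open>The ranges of the powers of T form a descending chain of subspaces that stabilises
  only at \<open>{0}\<close>; so their dimension drops at every step until they vanish.\<close>

lemma range_mat_pow_stable_imp_zero:
  fixes T :: "'a::field^('n::finite)^'n"
  assumes "nilpotent_mat T" and "range ((*v) (mat_pow T (Suc k))) = range ((*v) (mat_pow T k))"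
  shows "range ((*v) (mat_pow T k)) = {0}"
proof -
  define R where "R k = range ((*v) (mat_pow T k))" for k
  obtain K where K: "mat_pow T K = 0" using assms(1) unfolding nilpotent_mat_def by blast
  have img: "R (Suc k) = (*v) T ` R k" for k
    unfolding R_def by (auto simp: matrix_vector_mul_assoc image_image)
  have "R (k + j) = R k" for j
  proof (induction j)
    case (Suc j)
    then show ?case using img[of "k + j"] img[of k] assms(2) by (simp add: R_def)
  qed simp
  from this[of K] show ?thesis
    by (simp add: R_def[symmetric] add.commute) (simp add: R_def mat_pow_add K)
qed

lemma nilpotent_mat_pow_CARD:
  fixes T :: "'a::field^('n::finite)^'n"
  assumes "nilpotent_mat T"
  shows "mat_pow T CARD('n) *v y = 0"
proof -
  define R where "R k = range ((*v) (mat_pow T k))" for k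
  have "R k = {0} \<or> vec.dim (R k) + k \<le> CARD('n)" for k
  proof (induction k)
    case 0
    show ?case by (simp add: R_def card_cart_basis)
  next
    case (Suc k)
    have sub: "vec.subspace (R k)" for k
      unfolding R_def by (rule vec.subspace_image) (rule vec.subspace_UNIV)
    have le: "R (Suc k) \<subseteq> R k"
      unfolding R_def mat_pow_Suc' by (auto simp: matrix_vector_mul_assoc[symmetric])
    show ?case
    proof (cases "R k = {0}")
      case True
      then show ?thesis using le vec.subspace_0[OF sub[of "Suc k"]] by auto
    next
      case False
      then have "R (Suc k) \<subset> R k"
        using le range_mat_pow_stable_imp_zero[OF assms, of k] by (auto simp: R_def)
      then have "vec.span (R (Suc k)) \<subset> vec.span (R k)"
        using sub by (simp add: vec.span_eq_iff[THEN iffD2])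
      then have "vec.dim (R (Suc k)) < vec.dim (R k)" by (rule vec.dim_psubset)
      with Suc False show ?thesis by simp
    qed
  qed
  from this[of "CARD('n)"] show ?thesis unfolding R_def by auto
qed

lemma linear_le_quadratic_imp_zero:
  fixes d c :: real
  assumes "\<And>t. 2 * t * d \<le> t\<^sup>2 * c"
  shows "d = 0"
proof (rule ccontr)
  assume "d \<noteq> 0"
  have "c \<ge> 0" using assms[of 1] assms[of "-1"] by simp
  define t where "t = d / (c + 1)"
  have "t * d = d\<^sup>2 / (c + 1)" by (simp add: t_def power2_eq_square)
  then have "t * d > 0" using \<open>c \<ge> 0\<close> \<open>d \<noteq> 0\<close> by simp
  have "t\<^sup>2 * c = (t * d) * (c / (c + 1))"
    using \<open>c \<ge> 0\<close> by (simp add: t_def power2_eq_square field_simps)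
  also have "\<dots> \<le> t * d"
    using \<open>t * d > 0\<close> \<open>c \<ge> 0\<close> by (intro mult_left_le) auto
  finally show False using assms[of t] \<open>t * d > 0\<close> by (simp add: mult.assoc)
qed

text \<open>Compare \<open>\<parallel>f (v + t w)\<parallel>\<^sup>2 \<le> \<parallel>v + t w\<parallel>\<^sup>2\<close> to first order in t.\<close>

lemma contraction_norm_eq_imp_inner_eq:
  fixes f :: "'a::real_inner \<Rightarrow> 'b::real_inner"
  assumes "linear f" and contr: "\<And>y. norm (f y) \<le> norm y" and "norm (f v) = norm v"
  shows "inner (f v) (f w) = inner v w"
proof -
  interpret linear f by fact
  have "2 * t * (inner (f v) (f w) - inner v w) \<le> t\<^sup>2 * inner w w" for t :: real
  proof -
    have "(norm (f (v + t *\<^sub>R w)))\<^sup>2 \<le> (norm (v + t *\<^sub>R w))\<^sup>2"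
      using contr norm_ge_zero power_mono by blast
    then have "inner (f v + t *\<^sub>R f w) (f v + t *\<^sub>R f w) \<le> inner (v + t *\<^sub>R w) (v + t *\<^sub>R w)"
      by (simp add: power2_norm_eq_inner add scale)
    then have "inner (f v) (f v) + 2 * t * inner (f v) (f w) + t\<^sup>2 * inner (f w) (f w)
        \<le> inner v v + 2 * t * inner v w + t\<^sup>2 * inner w w"
      by (simp add: inner_add inner_commute power2_eq_square algebra_simps)
    moreover have "inner (f v) (f v) = inner v v"
      using assms(3) by (simp add: power2_norm_eq_inner[symmetric])
    moreover have "t\<^sup>2 * inner (f w) (f w) \<ge> 0" by simp
    moreover have "2 * t * (inner (f v) (f w) - inner v w) = 2 * t * inner (f v) (f w) - 2 * t * inner v w"
      by (simp add: algebra_simps)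
    ultimately show ?thesis by linarith
  qed
  then show ?thesis
    using linear_le_quadratic_imp_zero[of "inner (f v) (f w) - inner v w" "inner w w"] by simp
qed

definition cinner :: "complex^'n \<Rightarrow> complex^'n \<Rightarrow> complex" where
  "cinner x y = (\<Sum>r\<in>UNIV. x $ r * cnj (y $ r))"

lemma Re_cinner: "Re (cinner x y) = inner x y"
  by (simp add: cinner_def inner_vec_def inner_complex_def)

lemma Im_cinner: "Im (cinner x y) = inner x (\<i> *s y)"
  by (simp add: cinner_def inner_vec_def inner_complex_def)

lemma cinner_self: "cinner x x = of_real ((norm x)\<^sup>2)"
  by (simp add: complex_eq_iff Re_cinner power2_norm_eq_inner) (simp add: cinner_def)

lemma cinner_zero_right [simp]: "cinner x 0 = 0"
  by (simp add: cinner_def)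

lemma cinner_commute: "cinner y x = cnj (cinner x y)"
  by (simp add: cinner_def mult.commute)

text \<open>The real inner products with w and \<open>\<i> w\<close> are the real and imaginary parts of cinner.\<close>

lemma contraction_norm_eq_imp_cinner_eq:
  fixes T :: "complex^'n^'n"
  assumes "\<And>y. norm (T *v y) \<le> norm y" and "norm (T *v v) = norm v"
  shows "cinner (T *v v) (T *v w) = cinner v w"
  using contraction_norm_eq_imp_inner_eq[of "(*v) T", OF _ assms, of w]
    contraction_norm_eq_imp_inner_eq[of "(*v) T", OF _ assms, of "\<i> *s w"]
  by (simp add: complex_eq_iff Re_cinner Im_cinner vector_scalar_commute)

lemma op_norm_attained:
  fixes A :: "complex^'n^'n"
  obtains x where "norm x = 1" "norm (A *v x) = op_norm A"
proof -
  have "\<exists>x\<in>sphere 0 1. \<forall>y\<in>sphere 0 1. norm (A *v y) \<le> norm (A *v x)"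
    by (rule continuous_attains_sup)
      (auto intro!: continuous_on_norm[OF linear_continuous_on[OF matrix_vector_mul_bounded_linear]])
  then obtain x where x: "norm x = 1" "\<And>y. norm y = 1 \<Longrightarrow> norm (A *v y) \<le> norm (A *v x)"
    by auto
  have "norm (A *v y) \<le> norm (A *v x) * norm y" for y
  proof (cases "y = 0")
    case False
    have "norm (A *v (inverse (norm y) *\<^sub>R y)) \<le> norm (A *v x)"
      using x(2) False by simp
    then show ?thesis using False
      by (simp add: vec.scale[symmetric] linear_cmul[OF matrix_vector_mul_linear] field_simps)
  qed simp
  then have "op_norm A \<le> norm (A *v x)" unfolding op_norm_def by (rule onorm_le)
  moreover have "norm (A *v x) \<le> op_norm A"
    using onorm[OF matrix_vector_mul_bounded_linear, of A x] x(1) by (simp add: op_norm_def)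
  ultimately show thesis using x(1) that by auto
qed

lemma contraction_mat_pow:
  fixes T :: "complex^'n^'n"
  assumes "\<And>y. norm (T *v y) \<le> norm y"
  shows "norm (mat_pow T k *v y) \<le> norm y"
proof (induction k)
  case (Suc k)
  have "norm (T *v (mat_pow T k *v y)) \<le> norm (mat_pow T k *v y)" by (rule assms)
  also have "\<dots> \<le> norm y" by (rule Suc)
  finally show ?case by (simp add: matrix_vector_mul_assoc[symmetric])
qed simp

lemma contraction_orbit_norm_eq_one:
  fixes T :: "complex^'n^'n"
  assumes "\<And>y. norm (T *v y) \<le> norm y"
    and "norm x = 1" and "norm (mat_pow T m *v x) = 1" and "k \<le> m"
  shows "norm (mat_pow T k *v x) = 1"
proof -
  have "1 = norm (mat_pow T (m - k) *v (mat_pow T k *v x))"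
    using assms(3,4) mat_pow_mulv_add[of T "m - k" k x] by simp
  also have "\<dots> \<le> norm (mat_pow T k *v x)"
    by (rule contraction_mat_pow[OF assms(1)])
  finally show ?thesis
    using contraction_mat_pow[OF assms(1), of k x] assms(2) by simp
qed

lemma contraction_orbit_orthonormal:
  fixes T :: "complex^'n^'n"
  assumes contr: "\<And>y. norm (T *v y) \<le> norm y"
    and "norm x = 1" and "norm (mat_pow T m *v x) = 1" and "mat_pow T (Suc m) *v x = 0"
    and "i \<le> m" and "j \<le> m"
  shows "cinner (mat_pow T i *v x) (mat_pow T j *v x) = (if i = j then 1 else 0)"
proof -
  define v where "v k = mat_pow T k *v x" for k
  have v_Suc: "v (Suc k) = T *v v k" for k
    by (simp add: v_def matrix_vector_mul_assoc)
  have unit: "norm (v k) = 1" if "k \<le> m" for k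
    using contraction_orbit_norm_eq_one[OF contr assms(2,3) that] by (simp add: v_def)
  have shift: "cinner (v i) (v j) = cinner (v (i + d)) (v (j + d))" if "i + d \<le> m" for i j d
    using that
  proof (induction d)
    case (Suc d)
    have "norm (T *v v (i + d)) = norm (v (i + d))"
      using unit[of "Suc (i + d)"] unit[of "i + d"] Suc.prems by (simp add: v_Suc)
    then show ?case
      using Suc contraction_norm_eq_imp_cinner_eq[OF contr] by (simp add: v_Suc)
  qed simp
  have orth: "cinner (v i) (v j) = 0" if "i < j" "i \<le> m" for i j
  proof -
    have "j + (m - i) = (j - Suc i) + Suc m" using that by simp
    then have "v (j + (m - i)) = mat_pow T (j - Suc i) *v (mat_pow T (Suc m) *v x)"
      unfolding v_def by (simp only: mat_pow_mulv_add)
    then have "v (j + (m - i)) = 0" using assms(4) by simp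
    then show ?thesis using shift[of i "m - i" j] that by simp
  qed
  show ?thesis
  proof (cases i j rule: linorder_cases)
    case less then show ?thesis using orth assms(5) by (simp add: v_def)
  next
    case equal then show ?thesis using unit assms(5) by (simp add: v_def cinner_self)
  next
    case greater then show ?thesis
      using orth[of j i] assms(6) cinner_commute[of "v i" "v j"] by (simp add: v_def)
  qed
qed

lemma idx_pos_mono: "(i::'n::{finite,wellorder}) < j \<Longrightarrow> idx_pos i < idx_pos j"
  unfolding idx_pos_def by (rule psubset_card_mono) auto

lemma idx_pos_eq_iff: "idx_pos (i::'n::{finite,wellorder}) = idx_pos j \<longleftrightarrow> i = j"
  by (metis idx_pos_mono less_irrefl neqE)

lemma idx_pos_less_CARD: "idx_pos (i::'n::{finite,wellorder}) < CARD('n)"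
  unfolding idx_pos_def by (rule psubset_card_mono) auto

lemma idx_pos_surj:
  assumes "p < CARD('n::{finite,wellorder})"
  obtains i :: "'n::{finite,wellorder}" where "idx_pos i = p"
proof -
  have "inj (idx_pos :: 'n \<Rightarrow> nat)" by (simp add: inj_on_def idx_pos_eq_iff)
  then have "idx_pos ` (UNIV::'n set) = {..<CARD('n)}"
    using idx_pos_less_CARD by (intro card_subset_eq) (auto simp: card_image)
  then show thesis using assms that by (metis imageE lessThan_iff)
qed

definition cols_mat ::
    "(nat \<Rightarrow> complex^('n::{finite,wellorder})) \<Rightarrow> complex^('n::{finite,wellorder})^('n::{finite,wellorder})"
  where
  "cols_mat u = (\<chi> r (c::'n). u (idx_pos c) $ r)"

lemma unitary_cols_mat:
  fixes u :: "nat \<Rightarrow> complex^('n::{finite,wellorder})"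
  assumes "\<And>p q. p < CARD('n) \<Longrightarrow> q < CARD('n) \<Longrightarrow> cinner (u p) (u q) = (if p = q then 1 else 0)"
  shows "unitary_mat (cols_mat u)"
proof -
  have "(adjoint_mat (cols_mat u) ** cols_mat u) $ a $ b = mat 1 $ a $ b" for a b :: 'n
  proof -
    have "(adjoint_mat (cols_mat u) ** cols_mat u) $ a $ b = cinner (u (idx_pos b)) (u (idx_pos a))"
      by (simp add: matrix_matrix_mult_def adjoint_mat_def cols_mat_def cinner_def mult.commute)
    then show ?thesis
      using assms idx_pos_less_CARD[of a] idx_pos_less_CARD[of b] idx_pos_eq_iff[of b a]
      by (auto simp: mat_def)
  qed
  then have "adjoint_mat (cols_mat u) ** cols_mat u = mat 1" by (simp add: vec_eq_iff)
  then show ?thesis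
    unfolding unitary_mat_def by (simp add: matrix_left_right_inverse)
qed

lemma cols_mat_mult_shift_mat:
  fixes T :: "complex^('n::{finite,wellorder})^('n::{finite,wellorder})"
  assumes "T *v u 0 = 0" and "\<And>p. 0 < p \<Longrightarrow> p < CARD('n) \<Longrightarrow> T *v u p = u (p - 1)"
  shows "T ** cols_mat u = cols_mat u ** shift_mat"
proof -
  have "(T ** cols_mat u) $ r $ c = (cols_mat u ** shift_mat) $ r $ c" for r c
  proof -
    have lhs: "(T ** cols_mat u) $ r $ c = (T *v u (idx_pos c)) $ r"
      by (simp add: matrix_matrix_mult_def matrix_vector_mult_def cols_mat_def)
    have rhs: "(cols_mat u ** shift_mat) $ r $ c =
        (\<Sum>k::'n\<in>UNIV. if idx_pos c = idx_pos k + 1 then u (idx_pos k) $ r else 0)"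
      by (simp add: matrix_matrix_mult_def cols_mat_def shift_mat_def if_distrib cong: if_cong)
    show ?thesis
    proof (cases "idx_pos c = 0")
      case True
      then show ?thesis using lhs rhs assms(1) by simp
    next
      case False
      have "idx_pos c - 1 < CARD('n)" using idx_pos_less_CARD[of c] by simp
      then obtain q :: 'n where q: "idx_pos q = idx_pos c - 1" by (rule idx_pos_surj)
      have iff: "idx_pos c = idx_pos k + 1 \<longleftrightarrow> k = q" for k
        using q False idx_pos_eq_iff[of k q] by auto
      have "(cols_mat u ** shift_mat) $ r $ c = u (idx_pos c - 1) $ r"
        unfolding rhs iff using q by simp
      then show ?thesis
        using lhs False assms(2) idx_pos_less_CARD[of c] by simp
    qed
  qed
  then show ?thesis by (simp add: vec_eq_iff)
qed

lemma unitarily_similar_shift_mat_if_orthonormal_chain: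
  fixes T :: "complex^('n::{finite,wellorder})^('n::{finite,wellorder})"
  assumes "\<And>p q. p < CARD('n) \<Longrightarrow> q < CARD('n) \<Longrightarrow> cinner (u p) (u q) = (if p = q then 1 else 0)"
    and "T *v u 0 = 0" and "\<And>p. 0 < p \<Longrightarrow> p < CARD('n) \<Longrightarrow> T *v u p = u (p - 1)"
  shows "\<exists>U. unitary_mat U \<and> T = U ** shift_mat ** adjoint_mat U"
proof (intro exI conjI)
  show U: "unitary_mat (cols_mat u)" by (rule unitary_cols_mat) fact
  have "T = T ** (cols_mat u ** adjoint_mat (cols_mat u))"
    using U by (simp add: unitary_mat_def)
  also have "\<dots> = cols_mat u ** shift_mat ** adjoint_mat (cols_mat u)"
    by (simp add: matrix_mul_assoc cols_mat_mult_shift_mat[OF assms(2,3)])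
  finally show "T = cols_mat u ** shift_mat ** adjoint_mat (cols_mat u)" .
qed

theorem lemma2p1:
  fixes T :: "complex^('n::{finite,wellorder})^('n::{finite,wellorder})"
  assumes "nilpotent_mat T"
    and "op_norm T = 1"
    and "op_norm (mat_pow T (CARD('n) - 1)) = 1"
  shows "\<exists>U. unitary_mat U \<and> T = U ** shift_mat ** adjoint_mat U"
proof -
  define m where "m = CARD('n) - 1"
  have m: "Suc m = CARD('n)" by (simp add: m_def)
  obtain x where x: "norm x = 1" "norm (mat_pow T m *v x) = 1"
    using op_norm_attained[of "mat_pow T m"] assms(3) by (auto simp: m_def)
  have contr: "norm (T *v y) \<le> norm y" for y
    using onorm[OF matrix_vector_mul_bounded_linear, of T y] assms(2) by (simp add: op_norm_def)
  have killed: "mat_pow T (Suc m) *v x = 0"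
    using nilpotent_mat_pow_CARD[OF assms(1)] by (simp add: m)
  define u where "u p = mat_pow T (m - p) *v x" for p
  show ?thesis
  proof (rule unitarily_similar_shift_mat_if_orthonormal_chain[of u])
    show "cinner (u p) (u q) = (if p = q then 1 else 0)" if "p < CARD('n)" "q < CARD('n)" for p q
      using contraction_orbit_orthonormal[OF contr x killed, of "m - p" "m - q"] that
      by (auto simp: u_def m[symmetric])
    show "T *v u 0 = 0"
      using killed by (simp add: u_def matrix_vector_mul_assoc)
    show "T *v u p = u (p - 1)" if "0 < p" "p < CARD('n)" for p
      using that by (simp add: u_def matrix_vector_mul_assoc Suc_diff_le m[symmetric])
  qed
qed

end
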